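(* Let $T_{ab}$ be any rank-2 tensor. Then $T_{ac}T_b{}^c=f g_{ab}$ for some real $f$ if and only if $T_a{}^b$ is a null-cone preserving map, i.e. $k^aT_a{}^b$ is null or zero for every null vector $k$.
   Context: Lorentzian metric $g_{ab}$ of signature $(+,-,\dots,-)$ in dimension $N\ge2$; a vector $v$ is null if $v\neq0$ and $v_av^a=0$. *)

theory Defs
  imports "HOL-Analysis.Analysis"
begin

text \<open>Components of tensors w.r.t. a fixed basis indexed by the finite type 'n
  (dimension N = CARD('n)). A metric / covariant rank-2 tensor is a matrix
  g :: real^'n^'n with entries g_ab; a vector k^a is an element of real^'n.\<close>

definition lorentzian :: "real^'n^'n \<Rightarrow> bool" where
  "lorentzian g \<longleftrightarrow> transpose g = g \<and>
     (\<exists>P :: real^'n^'n. \<exists>i0. invertible P \<and>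
        transpose P ** g ** P = (\<chi> i j. if i = j then (if i = i0 then 1 else -1) else 0))"

definition metric_prod :: "real^'n^'n \<Rightarrow> real^'n \<Rightarrow> real^'n \<Rightarrow> real" where
  "metric_prod g v w = v \<bullet> (g *v w)"

definition is_null :: "real^'n^'n \<Rightarrow> real^'n \<Rightarrow> bool" where
  "is_null g v \<longleftrightarrow> v \<noteq> 0 \<and> metric_prod g v v = 0"

text \<open>Index raising: T_a^b = T_ac g^cb, with g^ab the inverse metric.\<close>
definition raise2 :: "real^'n^'n \<Rightarrow> real^'n^'n \<Rightarrow> real^'n^'n" where
  "raise2 g T = T ** matrix_inv g"

definition contract_vec :: "real^'n \<Rightarrow> real^'n^'n \<Rightarrow> real^'n" where
  "contract_vec k M = k v* M"

text \<open>T_ac T_b^c = T_ac g^cd T_bd\<close>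
definition TT_contr :: "real^'n^'n \<Rightarrow> real^'n^'n \<Rightarrow> real^'n^'n" where
  "TT_contr g T = T ** matrix_inv g ** transpose T"

definition null_cone_preserving :: "real^'n^'n \<Rightarrow> real^'n^'n \<Rightarrow> bool" where
  "null_cone_preserving g M \<longleftrightarrow>
     (\<forall>k. is_null g k \<longrightarrow> is_null g (contract_vec k M) \<or> contract_vec k M = 0)"

end

theory Submission
  imports Defs
begin

text \<open>Put S = T g^-1 T^t, the matrix of T_ac T_b^c. For every k the vector k^a T_a^b has
  g-norm k S k, so T_a^b preserves the null cone exactly when the quadratic form of S vanishes on
  the null cone of g. In a basis where g = diag(1,-1,...,-1) the null vectors e_0 \<plusminus> e_j force
  S_0j = 0 and S_jj = -S_00, and the null vector 5e_0 + 3e_j + 4e_l then forces S_jl = 0;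
  hence S = S_00 g.\<close>

lemma matrix_inv_right: "invertible A \<Longrightarrow> A ** matrix_inv A = mat 1"
  and matrix_inv_left: "invertible A \<Longrightarrow> matrix_inv A ** A = mat 1"
  using someI_ex[of "\<lambda>A'. A ** A' = mat 1 \<and> A' ** A = mat 1"]
  unfolding invertible_def matrix_inv_def by auto

lemma transpose_matrix_inv_symmetric:
  fixes A :: "'a::field^'n^'n"
  assumes "transpose A = A" and "invertible A"
  shows "transpose (matrix_inv A) = matrix_inv A"
proof -
  have inv_t: "transpose (matrix_inv A) ** A = mat 1"
    by (metis assms matrix_inv_right matrix_transpose_mul transpose_mat)
  have "transpose (matrix_inv A) = transpose (matrix_inv A) ** (A ** matrix_inv A)"
    using matrix_inv_right[OF assms(2)] by simp
  also have "\<dots> = (transpose (matrix_inv A) ** A) ** matrix_inv A"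
    by (simp only: matrix_mul_assoc)
  finally show ?thesis
    using inv_t by simp
qed

lemma transpose_congruence:
  fixes A P :: "'a::comm_semiring_1^'n^'n"
  shows "transpose (transpose P ** A ** P) = transpose P ** transpose A ** P"
  by (simp add: matrix_transpose_mul matrix_mul_assoc)

lemma congruence_cancel:
  fixes A B P :: "'a::field^'n^'n"
  assumes "invertible P" and "transpose P ** A ** P = transpose P ** B ** P"
  shows "A = B"
proof -
  define Q where "Q = matrix_inv P"
  have PQ: "P ** Q = mat 1"
    using matrix_inv_right[OF assms(1)] by (simp add: Q_def)
  have "transpose Q ** (transpose P ** A ** P) ** Q = transpose (P ** Q) ** A ** (P ** Q)" for A
    by (simp add: matrix_transpose_mul matrix_mul_assoc)
  then show ?thesis
    using assms(2) PQ by (metis matrix_mul_lid matrix_mul_rid transpose_mat)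
qed

lemma metric_prod_axis: "metric_prod A (axis i 1) (axis j 1) = A$i$j"
  by (simp add: metric_prod_def inner_axis' matrix_vector_mult_basis column_def)

lemma metric_prod_scaleR_left: "metric_prod (f *\<^sub>R A) x y = f * metric_prod A x y"
  by (simp add: metric_prod_def scaleR_matrix_vector_assoc[symmetric])

lemma metric_prod_congruence:
  "metric_prod A (P *v x) (P *v y) = metric_prod (transpose P ** A ** P) x y"
proof -
  have "(P *v x) \<bullet> (A *v (P *v y)) = (x v* transpose P) \<bullet> (A *v (P *v y))"
    by simp
  also have "\<dots> = x \<bullet> (transpose P *v (A *v (P *v y)))"
    by (rule dot_lmul_matrix)
  finally show ?thesis
    by (simp add: metric_prod_def matrix_vector_mul_assoc matrix_mul_assoc)
qed

lemma metric_prod_axis3: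
  fixes A :: "real^'n^'n" and a b c :: real and i j l :: 'n
  defines "x \<equiv> a *\<^sub>R axis i 1 + b *\<^sub>R axis j 1 + c *\<^sub>R axis l 1"
  shows "metric_prod A x x = a*a*A$i$i + b*b*A$j$j + c*c*A$l$l
    + a*b*(A$i$j + A$j$i) + a*c*(A$i$l + A$l$i) + b*c*(A$j$l + A$l$j)"
  using metric_prod_axis[of A]
  by (simp add: x_def metric_prod_def matrix_vector_right_distrib matrix_vector_mult_scaleR
      inner_add_left inner_add_right algebra_simps)

definition minkowski_diag :: "'n \<Rightarrow> real^'n^'n" where
  "minkowski_diag i0 = (\<chi> i j. if i = j then (if i = i0 then 1 else -1) else 0)"

lemma minkowski_diag_nth:
  "minkowski_diag i0 $ i $ j = (if i = j then (if i = i0 then 1 else -1) else 0)"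
  by (simp add: minkowski_diag_def)

lemma invertible_minkowski_diag: "invertible (minkowski_diag i0)"
proof -
  have "(\<Sum>k\<in>UNIV. minkowski_diag i0 $ i $ k * minkowski_diag i0 $ k $ j)
      = (\<Sum>k\<in>UNIV. if k = i then minkowski_diag i0 $ i $ i * minkowski_diag i0 $ i $ j else 0)"
    for i j
    by (rule sum.cong) (auto simp: minkowski_diag_nth)
  then have "minkowski_diag i0 ** minkowski_diag i0 = mat 1"
    by (simp add: matrix_matrix_mult_def mat_def vec_eq_iff minkowski_diag_nth)
  then show ?thesis
    unfolding invertible_def by blast
qed

lemma lorentzian_invertible:
  fixes g :: "real^'n^'n"
  assumes "lorentzian g"
  shows "invertible g"
proof -
  obtain P :: "real^'n^'n" and i0 where "invertible P"
    and "transpose P ** g ** P = minkowski_diag i0"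
    using assms unfolding lorentzian_def minkowski_diag_def by blast
  then have "det P * det g * det P \<noteq> 0"
    using invertible_minkowski_diag[of i0] by (metis invertible_det_nz det_mul det_transpose)
  then show ?thesis
    by (simp add: invertible_det_nz)
qed

lemma minkowski_null_cone_determines_form:
  fixes S :: "real^'n^'n"
  assumes "transpose S = S"
    and null: "\<And>x. is_null (minkowski_diag i0) x \<Longrightarrow> metric_prod S x x = 0"
  shows "S = S$i0$i0 *\<^sub>R minkowski_diag i0"
proof -
  let ?\<eta> = "minkowski_diag i0"
  have sym: "S$i$j = S$j$i" for i j
    using assms(1) by (metis transpose_def vec_lambda_beta)
  have axis3_nonzero: "a *\<^sub>R axis i0 1 + b *\<^sub>R axis j 1 + c *\<^sub>R axis l 1 \<noteq> (0::real^'n)"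
    if "j \<noteq> i0" "l \<noteq> i0" "a \<noteq> 0" for a b c j l
  proof
    assume "a *\<^sub>R axis i0 1 + b *\<^sub>R axis j 1 + c *\<^sub>R axis l 1 = (0::real^'n)"
    then have "(a *\<^sub>R axis i0 1 + b *\<^sub>R axis j 1 + c *\<^sub>R axis l (1::real)) $ i0 = 0"
      by simp
    with that show False
      by (simp add: axis_def)
  qed
  have null_axis3: "a*a*S$i0$i0 + b*b*S$j$j + c*c*S$l$l + a*b*(S$i0$j + S$j$i0)
      + a*c*(S$i0$l + S$l$i0) + b*c*(S$j$l + S$l$j) = 0"
    if "j \<noteq> i0" "l \<noteq> i0" "a \<noteq> 0"
      and "a*a*?\<eta>$i0$i0 + b*b*?\<eta>$j$j + c*c*?\<eta>$l$l + a*b*(?\<eta>$i0$j + ?\<eta>$j$i0)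
        + a*c*(?\<eta>$i0$l + ?\<eta>$l$i0) + b*c*(?\<eta>$j$l + ?\<eta>$l$j) = 0"
    for a b c j l
    using null[of "a *\<^sub>R axis i0 1 + b *\<^sub>R axis j 1 + c *\<^sub>R axis l 1"]
      axis3_nonzero[OF that(1-3)] that(4)
    by (simp only: is_null_def metric_prod_axis3) simp
  have time_space: "S$i0$j = 0" and space_diag: "S$j$j = - S$i0$i0" if "j \<noteq> i0" for j
  proof -
    have "S$i0$i0 + S$j$j + 2 * S$i0$j = 0"
      using null_axis3[OF that that, of 1 1 0] that sym[of j i0] by (simp add: minkowski_diag_nth)
    moreover have "S$i0$i0 + S$j$j - 2 * S$i0$j = 0"
      using null_axis3[OF that that, of 1 "-1" 0] that sym[of j i0] by (simp add: minkowski_diag_nth)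
    ultimately show "S$i0$j = 0" "S$j$j = - S$i0$i0"
      by linarith+
  qed
  have space_offdiag: "S$j$l = 0" if "j \<noteq> i0" "l \<noteq> i0" "j \<noteq> l" for j l
  proof -
    have "25*S$i0$i0 + 9*S$j$j + 16*S$l$l + 15*(S$i0$j + S$j$i0) + 20*(S$i0$l + S$l$i0)
        + 12*(S$j$l + S$l$j) = 0"
      using null_axis3[OF that(1,2), of 5 3 4] that by (simp add: minkowski_diag_nth)
    then show ?thesis
      using time_space[OF that(1)] time_space[OF that(2)] space_diag[OF that(1)]
        space_diag[OF that(2)] sym[of j i0] sym[of l i0] sym[of l j]
      by (simp add: algebra_simps)
  qed
  show ?thesis
  proof (rule iffD2[OF vec_eq_iff], intro allI iffD2[OF vec_eq_iff])
    fix i j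
    show "S$i$j = (S$i0$i0 *\<^sub>R ?\<eta>)$i$j"
    proof (cases "i = i0")
      case True
      then show ?thesis
        using time_space[of j] by (cases "j = i0") (auto simp: minkowski_diag_nth)
    next
      case False
      then show ?thesis
        using time_space[of i] sym[of i i0] space_offdiag[of i j] space_diag[of i]
        by (cases "j = i0"; cases "i = j") (auto simp: minkowski_diag_nth)
    qed
  qed
qed

lemma null_cone_determines_form:
  fixes g S :: "real^'n^'n"
  assumes "lorentzian g" and "transpose S = S"
    and null: "\<And>k. is_null g k \<Longrightarrow> metric_prod S k k = 0"
  shows "\<exists>f. S = f *\<^sub>R g"
proof -
  obtain P :: "real^'n^'n" and i0 where P: "invertible P"
    and g_diag: "transpose P ** g ** P = minkowski_diag i0"
    using assms(1) unfolding lorentzian_def minkowski_diag_def by blast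
  define S' where "S' = transpose P ** S ** P"
  have "metric_prod S' x x = 0" if "is_null (minkowski_diag i0) x" for x
  proof -
    have "P *v x \<noteq> 0"
      using that P unfolding is_null_def invertible_def
      by (metis matrix_vector_mul_assoc matrix_vector_mul_lid matrix_vector_mult_0_right)
    moreover have "metric_prod g (P *v x) (P *v x) = 0"
      using that by (simp add: is_null_def metric_prod_congruence g_diag)
    ultimately show ?thesis
      using null[of "P *v x"] by (simp add: is_null_def S'_def metric_prod_congruence)
  qed
  moreover have "transpose S' = S'"
    using assms(2) by (simp add: S'_def transpose_congruence)
  ultimately have "S' = S'$i0$i0 *\<^sub>R minkowski_diag i0"
    using minkowski_null_cone_determines_form by blast
  moreover have "transpose P ** (c *\<^sub>R g) ** P = c *\<^sub>R (transpose P ** g ** P)" for c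
    by (simp add: matrix_scalar_ac scalar_matrix_assoc)
  ultimately have "transpose P ** S ** P = transpose P ** (S'$i0$i0 *\<^sub>R g) ** P"
    by (simp add: S'_def g_diag)
  then show ?thesis
    using congruence_cancel[OF P] by blast
qed

lemma multiple_iff_null_cone_vanishing:
  fixes g S :: "real^'n^'n"
  assumes "lorentzian g" and "transpose S = S"
  shows "(\<exists>f. S = f *\<^sub>R g) \<longleftrightarrow> (\<forall>k. is_null g k \<longrightarrow> metric_prod S k k = 0)"
  using null_cone_determines_form[OF assms]
  by (auto simp: metric_prod_scaleR_left is_null_def)

lemma transpose_TT_contr:
  assumes "transpose g = g" and "invertible g"
  shows "transpose (TT_contr g T) = TT_contr g T"
  using transpose_matrix_inv_symmetric[OF assms]
  by (simp add: TT_contr_def matrix_transpose_mul matrix_mul_assoc)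

lemma metric_prod_contract_raise2:
  fixes g T :: "real^'n^'n" and k :: "real^'n"
  assumes "transpose g = g" and "invertible g"
  defines "w \<equiv> contract_vec k (raise2 g T)"
  shows "metric_prod g w w = metric_prod (TT_contr g T) k k"
proof -
  let ?G = "matrix_inv g"
  have G_sym: "transpose ?G = ?G"
    using transpose_matrix_inv_symmetric[OF assms(1,2)] .
  have "w = transpose (T ** ?G) *v k"
    by (simp add: w_def contract_vec_def raise2_def)
  also have "\<dots> = (?G ** transpose T) *v k"
    using G_sym by (simp only: matrix_transpose_mul)
  finally have "metric_prod g w w
      = metric_prod (T ** (?G ** g) ** ?G ** transpose T) k k"
    using G_sym by (simp add: metric_prod_congruence matrix_transpose_mul matrix_mul_assoc)
  then show ?thesis
    by (simp add: matrix_inv_left[OF assms(2)] TT_contr_def)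
qed

lemma null_cone_preserving_raise2_iff:
  assumes "transpose g = g" and "invertible g"
  shows "null_cone_preserving g (raise2 g T)
    \<longleftrightarrow> (\<forall>k. is_null g k \<longrightarrow> metric_prod (TT_contr g T) k k = 0)"
proof -
  have "is_null g w \<or> w = 0 \<longleftrightarrow> metric_prod g w w = 0" for w
    by (auto simp: is_null_def metric_prod_def)
  then show ?thesis
    unfolding null_cone_preserving_def by (simp add: metric_prod_contract_raise2[OF assms])
qed

theorem mainTheorem8:
  fixes g T :: "real^'n^'n"
  assumes "CARD('n) \<ge> 2"
    and "lorentzian g"
  shows "(\<exists>f::real. TT_contr g T = f *\<^sub>R g) \<longleftrightarrow> null_cone_preserving g (raise2 g T)"
proof -
  have "transpose g = g" and "invertible g"
    using assms(2) lorentzian_invertible unfolding lorentzian_def by blast+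
  then show ?thesis
    using multiple_iff_null_cone_vanishing[OF assms(2) transpose_TT_contr]
      null_cone_preserving_raise2_iff by blast
qed

end
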